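(* There exists a nonempty tree-shift of finite type containing no periodic tree. For example, take $\mathcal{A}=\{0,1\}$, $A_0=\begin{pmatrix}0&1\\1&0\end{pmatrix}$ and $A_1=\begin{pmatrix}1&0\\0&1\end{pmatrix}$. Then $\mathsf{X}_{A_0,A_1}$ is nonempty and contains no periodic tree.
   Context: $\Sigma=\{0,1\}$ and $\Sigma^*$ is the set of finite words, with $\epsilon$ the empty word. A tree is a map $t:\Sigma^*\to\mathcal{A}$, and we write $t_x=t(x)$. For a word $w$, the shift $\sigma_w$ is defined by $(\sigma_w t)_x=t_{wx}$. A pattern is a map defined on a finite prefix-closed subset of $\Sigma^*$. $\mathsf{X}_{\mathcal{F}}$ is the set of trees in which no pattern of $\mathcal{F}$ occurs at any node. A tree-shift of finite type is $\mathsf{X}_{\mathcal{F}}$ with $\mathcal{F}$ finite. The vertex tree-shift is $\mathsf{X}_{A_0,A_1}=\{t: A_0(t_x,t_{x0})=1,\ A_1(t_x,t_{x1})=1\ \forall x\in\Sigma^*\}$; it is a tree-shift of finite type. A complete prefix code (CPC) is a finite set $P\subseteq\Sigma^*\setminus\{\epsilon\}$ such that no word of $P$ is a prefix of another word of $P$, and every $x\in\Sigma^*$ with $|x|\ge\max_{y\in P}|y|$ has a prefix in $P$. A tree $t\in X$ is periodic if there is a CPC $P$ with $\sigma_x t=t$ for all $x\in P$. *)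

theory Defs
  imports Main "HOL-Library.Sublist"
begin

text \<open>Sigma = {0,1} is encoded as bool (False = 0, True = 1); words in Sigma* are bool lists,
  concatenation w x is w @ x, and the empty word is []. A tree over alphabet 'a is a map
  bool list => 'a.\<close>

type_synonym word = "bool list"
type_synonym 'a tree = "word \<Rightarrow> 'a"

definition shift :: "word \<Rightarrow> 'a tree \<Rightarrow> 'a tree" where
  "shift w t = (\<lambda>x. t (w @ x))"

definition is_pattern :: "(word \<Rightarrow> 'a option) \<Rightarrow> bool" where
  "is_pattern p \<longleftrightarrow> finite (dom p) \<and> (\<forall>x\<in>dom p. \<forall>y. prefix y x \<longrightarrow> y \<in> dom p)"

definition occurs_at :: "(word \<Rightarrow> 'a option) \<Rightarrow> 'a tree \<Rightarrow> word \<Rightarrow> bool" where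
  "occurs_at p t x \<longleftrightarrow> (\<forall>y\<in>dom p. p y = Some (t (x @ y)))"

definition XF :: "(word \<Rightarrow> 'a option) set \<Rightarrow> 'a tree set" where
  "XF F = {t. \<forall>p\<in>F. \<forall>x. \<not> occurs_at p t x}"

definition tree_shift_finite_type :: "'a tree set \<Rightarrow> bool" where
  "tree_shift_finite_type X \<longleftrightarrow>
     (\<exists>F. finite F \<and> (\<forall>p\<in>F. is_pattern p) \<and> X = XF F)"

definition vertex_shift :: "('a \<Rightarrow> 'a \<Rightarrow> nat) \<Rightarrow> ('a \<Rightarrow> 'a \<Rightarrow> nat) \<Rightarrow> 'a tree set" where
  "vertex_shift A0 A1 = {t. \<forall>x. A0 (t x) (t (x @ [False])) = 1 \<and> A1 (t x) (t (x @ [True])) = 1}"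

text \<open>Complete prefix code. The condition "every x with |x| >= max_{y in P} |y| has a prefix
  in P" is written without Max (so the empty set is automatically not a CPC).\<close>
definition cpc :: "word set \<Rightarrow> bool" where
  "cpc P \<longleftrightarrow> finite P \<and> [] \<notin> P
     \<and> (\<forall>x\<in>P. \<forall>y\<in>P. prefix x y \<longrightarrow> x = y)
     \<and> (\<forall>x. (\<forall>y\<in>P. length y \<le> length x) \<longrightarrow> (\<exists>y\<in>P. prefix y x))"

definition periodic :: "'a tree \<Rightarrow> bool" where
  "periodic t \<longleftrightarrow> (\<exists>P. cpc P \<and> (\<forall>x\<in>P. shift x t = t))"

definition exA0 :: "bool \<Rightarrow> bool \<Rightarrow> nat" where
  "exA0 a b = (if a \<noteq> b then 1 else 0)"

definition exA1 :: "bool \<Rightarrow> bool \<Rightarrow> nat" where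
  "exA1 a b = (if a = b then 1 else 0)"

end

theory Submission
  imports Defs
begin

text \<open>The example forces each left child to carry the opposite symbol of its parent and each
  right child the same symbol. Such a tree exists (the parity of the number of left moves), but
  along the branch $0\,1\,1\,1\dots$ every node differs from the root. A complete prefix code
  contains a nonempty prefix of every long enough word, in particular a node on this branch, and
  periodicity forces the tree to take its root value there.\<close>

definition edge_pattern :: "bool \<Rightarrow> 'a \<Rightarrow> 'a \<Rightarrow> (word \<Rightarrow> 'a option)" where
  "edge_pattern c a b = [[] \<mapsto> a, [c] \<mapsto> b]"

definition vertex_patterns ::
  "('a \<Rightarrow> 'a \<Rightarrow> nat) \<Rightarrow> ('a \<Rightarrow> 'a \<Rightarrow> nat) \<Rightarrow> (word \<Rightarrow> 'a option) set" where
  "vertex_patterns A0 A1 =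
     (\<lambda>(c, a, b). edge_pattern c a b) ` {(c, a, b). (if c then A1 else A0) a b \<noteq> 1}"

lemma is_pattern_edge_pattern: "is_pattern (edge_pattern c a b)"
  unfolding is_pattern_def edge_pattern_def by (auto simp: prefix_Cons split: if_splits)

lemma occurs_at_edge_pattern:
  "occurs_at (edge_pattern c a b) t x \<longleftrightarrow> t x = a \<and> t (x @ [c]) = b"
  unfolding occurs_at_def edge_pattern_def by auto

lemma finite_vertex_patterns:
  "finite (vertex_patterns A0 A1 :: (word \<Rightarrow> 'a::finite option) set)"
  unfolding vertex_patterns_def by simp

lemma XF_vertex_patterns: "XF (vertex_patterns A0 A1) = vertex_shift A0 A1"
proof (rule set_eqI)
  fix t
  have "t \<in> XF (vertex_patterns A0 A1) \<longleftrightarrow>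
      (\<forall>x c. (if c then A1 else A0) (t x) (t (x @ [c])) = 1)"
    unfolding XF_def vertex_patterns_def by (simp add: occurs_at_edge_pattern) blast
  also have "\<dots> \<longleftrightarrow> t \<in> vertex_shift A0 A1"
    unfolding vertex_shift_def all_bool_eq by auto
  finally show "t \<in> XF (vertex_patterns A0 A1) \<longleftrightarrow> t \<in> vertex_shift A0 A1" .
qed

lemma tree_shift_finite_type_vertex_shift:
  "tree_shift_finite_type (vertex_shift A0 A1 :: 'a::finite tree set)"
  unfolding tree_shift_finite_type_def
proof (intro exI conjI)
  show "\<forall>p\<in>vertex_patterns A0 A1. is_pattern p"
    unfolding vertex_patterns_def by (auto simp: is_pattern_edge_pattern)
qed (simp_all add: finite_vertex_patterns XF_vertex_patterns)

lemma cpc_prefix_of_long_word: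
  assumes "cpc P" and "(\<Sum>y\<in>P. length y) \<le> length x"
  shows "\<exists>y\<in>P. y \<noteq> [] \<and> prefix y x"
proof -
  have "finite P" and "[] \<notin> P"
    and cover: "\<And>x. (\<forall>y\<in>P. length y \<le> length x) \<Longrightarrow> \<exists>y\<in>P. prefix y x"
    using assms(1) unfolding cpc_def by auto
  have "length y \<le> length x" if "y \<in> P" for y
    using member_le_sum[OF that _ \<open>finite P\<close>, of length] assms(2) by simp
  then obtain y where "y \<in> P" "prefix y x"
    using cover by blast
  moreover from \<open>y \<in> P\<close> \<open>[] \<notin> P\<close> have "y \<noteq> []"
    by blast
  ultimately show ?thesis by blast
qed

lemma periodic_root_value_recurs_on_branch:
  fixes \<beta> :: "nat \<Rightarrow> bool"
  assumes "periodic t"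
  shows "\<exists>n>0. t (map \<beta> [0..<n]) = t []"
proof -
  obtain P where "cpc P" and P_shift: "\<forall>y\<in>P. shift y t = t"
    using assms unfolding periodic_def by blast
  define N where "N = (\<Sum>y\<in>P. length y)"
  obtain y where "y \<in> P" "y \<noteq> []" and y_prefix: "prefix y (map \<beta> [0..<N])"
    using cpc_prefix_of_long_word[OF \<open>cpc P\<close>, of "map \<beta> [0..<N]"] by (auto simp: N_def)
  have "y = take (length y) (map \<beta> [0..<N])"
    using y_prefix by (auto simp: prefix_def)
  then have y_on_branch: "map \<beta> [0..<length y] = y"
    using prefix_length_le[OF y_prefix] by (simp add: take_map min_def)
  have "t y = t []"
    using fun_cong[OF P_shift[rule_format, OF \<open>y \<in> P\<close>], of "[]"] by (simp add: shift_def)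
  then show ?thesis
    using \<open>y \<noteq> []\<close> y_on_branch by (intro exI[of _ "length y"]) simp
qed

lemma vertex_shift_example_iff:
  "t \<in> vertex_shift exA0 exA1 \<longleftrightarrow> (\<forall>x. t (x @ [False]) = (\<not> t x) \<and> t (x @ [True]) = t x)"
  unfolding vertex_shift_def exA0_def exA1_def by (auto split: if_splits)

lemma parity_of_left_moves_in_vertex_shift_example:
  "(\<lambda>x. odd (length (filter Not x))) \<in> vertex_shift exA0 exA1"
  unfolding vertex_shift_example_iff by simp

lemma vertex_shift_example_not_periodic:
  assumes "t \<in> vertex_shift exA0 exA1"
  shows "\<not> periodic t"
proof
  define \<beta> :: "nat \<Rightarrow> bool" where "\<beta> i = (i \<noteq> 0)" for i
  have left: "t (x @ [False]) = (\<not> t x)" and right: "t (x @ [True]) = t x" for x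
    using assms by (simp_all add: vertex_shift_example_iff)
  have branch: "t (map \<beta> [0..<Suc k]) = (\<not> t [])" for k
  proof (induction k)
    case 0
    show ?case using left[of "[]"] by (simp add: \<beta>_def)
  next
    case (Suc k)
    have "map \<beta> [0..<Suc (Suc k)] = map \<beta> [0..<Suc k] @ [True]"
      by (simp add: \<beta>_def)
    then show ?case by (simp only: right Suc.IH)
  qed
  assume "periodic t"
  then obtain n where "n > 0" "t (map \<beta> [0..<n]) = t []"
    using periodic_root_value_recurs_on_branch by blast
  then show False using branch[of "n - 1"] by simp
qed

theorem theorem3p3:
  shows "(\<exists>X :: bool tree set. tree_shift_finite_type X \<and> X \<noteq> {} \<and> (\<forall>t\<in>X. \<not> periodic t))
    \<and> vertex_shift exA0 exA1 \<noteq> {} \<and> (\<forall>t\<in>vertex_shift exA0 exA1. \<not> periodic t)"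
  using tree_shift_finite_type_vertex_shift parity_of_left_moves_in_vertex_shift_example
    vertex_shift_example_not_periodic
  by blast

end
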